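(* In the setting below, suppose $p,q\geq5$. Then for all $i,j,k,l\in\mathbb Z/N\mathbb Z$ with $i\neq j$ and $k\neq l$ (not otherwise required to be distinct) we have $\#(P_{ij}\cap P_{kl})\geq p-3$ and $\#(Q_{ij}\cap Q_{kl})\geq q-3$.
   Context: Setting: $p,q$ distinct primes, $N=p+q$; $M=(m_{ik})_{i,k\in\mathbb Z/N\mathbb Z}$ has entries in $\mathbb Z/pq\mathbb Z$ and $(e^{2\pi i\,m_{ik}/pq})$ is a complex Hadamard matrix (unimodular entries, orthogonal rows). $L_i(k)=m_{ik}$, $L_{ij}=L_j-L_i$. For $d\mid pq$, $d(\mathbb Z/pq\mathbb Z)$ is the subgroup of multiples of $d$. For distinct $i,j$ there is a partition $\mathbb Z/N\mathbb Z=P_{ij}\sqcup Q_{ij}\sqcup R_{ij}$ and $r\in\mathbb Z/pq\mathbb Z$ with: $\#R_{ij}=2$ and $L_{ij}\equiv r$ on $R_{ij}$; $\#P_{ij}=p-1$ and $L_{ij}(P_{ij})=(r+q(\mathbb Z/pq\mathbb Z))\setminus\{r\}$; $\#Q_{ij}=q-1$ and $L_{ij}(Q_{ij})=(r+p(\mathbb Z/pq\mathbb Z))\setminus\{r\}$. This partition is unique ($R_{ij}$ is the pair of indices where $L_{ij}$ takes its unique repeated value). Put $P^+_{ij}=P_{ij}\cup R_{ij}$, $Q^+_{ij}=Q_{ij}\cup R_{ij}$. *)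

theory Defs
  imports Complex_Main "HOL-Computational_Algebra.Primes"
begin

text \<open>Indices of Z/NZ are represented by the naturals 0..<N; entries of Z/pqZ by integers,
  read modulo p*q.  The matrix M is a function nat => nat => int, M i k = m_ik.\<close>

definition hadamard_phase :: "nat \<Rightarrow> nat \<Rightarrow> (nat \<Rightarrow> nat \<Rightarrow> int) \<Rightarrow> bool" where
  "hadamard_phase N n M \<longleftrightarrow>
     (\<forall>i<N. \<forall>j<N. i \<noteq> j \<longrightarrow>
        (\<Sum>k<N. exp (2 * pi * \<i> * of_int (M i k) / of_nat n) *
                 cnj (exp (2 * pi * \<i> * of_int (M j k) / of_nat n))) = 0)"

definition Ldiff :: "nat \<Rightarrow> nat \<Rightarrow> (nat \<Rightarrow> nat \<Rightarrow> int) \<Rightarrow> nat \<Rightarrow> nat \<Rightarrow> nat \<Rightarrow> int" where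
  "Ldiff p q M i j k = (M j k - M i k) mod int (p * q)"

definition coset_mod :: "nat \<Rightarrow> nat \<Rightarrow> nat \<Rightarrow> int \<Rightarrow> int set" where
  "coset_mod p q d r = {x. \<exists>t::int. x = (r + int d * t) mod int (p * q)}"

definition pqr_partition ::
  "nat \<Rightarrow> nat \<Rightarrow> (nat \<Rightarrow> nat \<Rightarrow> int) \<Rightarrow> nat \<Rightarrow> nat \<Rightarrow>
   nat set \<Rightarrow> nat set \<Rightarrow> nat set \<Rightarrow> int \<Rightarrow> bool" where
  "pqr_partition p q M i j P Q R r \<longleftrightarrow>
     P \<union> Q \<union> R = {..<p + q} \<and> P \<inter> Q = {} \<and> P \<inter> R = {} \<and> Q \<inter> R = {} \<and>
     r \<in> {0..<int (p * q)} \<and>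
     card R = 2 \<and> (\<forall>k\<in>R. Ldiff p q M i j k = r) \<and>
     card P = p - 1 \<and> Ldiff p q M i j ` P = coset_mod p q q r - {r} \<and>
     card Q = q - 1 \<and> Ldiff p q M i j ` Q = coset_mod p q p r - {r}"

definition Pset :: "nat \<Rightarrow> nat \<Rightarrow> (nat \<Rightarrow> nat \<Rightarrow> int) \<Rightarrow> nat \<Rightarrow> nat \<Rightarrow> nat set" where
  "Pset p q M i j = (THE P. \<exists>Q R r. pqr_partition p q M i j P Q R r)"

definition Qset :: "nat \<Rightarrow> nat \<Rightarrow> (nat \<Rightarrow> nat \<Rightarrow> int) \<Rightarrow> nat \<Rightarrow> nat \<Rightarrow> nat set" where
  "Qset p q M i j = (THE Q. \<exists>P R r. pqr_partition p q M i j P Q R r)"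

end

theory Submission
  imports Defs "HOL-Number_Theory.Cong"
begin

text \<open>Reduced modulo \<open>p\<close>, \<open>L\<^sub>i\<^sub>j\<close> is constant off \<open>P\<^sub>i\<^sub>j\<close> and injective on \<open>P\<^sub>i\<^sub>j\<close> with values
  avoiding that constant; modulo \<open>q\<close> the same holds for \<open>Q\<^sub>i\<^sub>j\<close>.  For distinct \<open>i, j, k\<close> the identity
  \<open>L\<^sub>j\<^sub>k = L\<^sub>i\<^sub>k - L\<^sub>i\<^sub>j\<close> makes \<open>L\<^sub>j\<^sub>k\<close> injective mod \<open>p\<close> on \<open>P\<^sub>i\<^sub>j - P\<^sub>i\<^sub>k\<close> and on \<open>P\<^sub>i\<^sub>k - P\<^sub>i\<^sub>j\<close>, with
  values avoiding \<open>r\<^sub>i\<^sub>k - r\<^sub>i\<^sub>j\<close>, and equal to \<open>r\<^sub>i\<^sub>k - r\<^sub>i\<^sub>j\<close> outside \<open>P\<^sub>i\<^sub>j \<union> P\<^sub>i\<^sub>k\<close>.  Injectivity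
  both mod \<open>p\<close> and mod \<open>q\<close> bounds \<open>#(P\<^sub>i\<^sub>j \<inter> Q\<^sub>i\<^sub>k)\<close> by 2, and with \<open>#R = 2\<close> and \<open>p, q \<ge> 5\<close> this
  leaves at least two indices outside \<open>P\<^sub>i\<^sub>j \<union> P\<^sub>i\<^sub>k\<close>.  Hence \<open>r\<^sub>i\<^sub>k - r\<^sub>i\<^sub>j\<close> is the base value of
  \<open>L\<^sub>j\<^sub>k\<close> mod \<open>p\<close> and the symmetric difference of \<open>P\<^sub>i\<^sub>j\<close> and \<open>P\<^sub>i\<^sub>k\<close> lies in \<open>P\<^sub>j\<^sub>k\<close>.  Together
  with the same statement for the \<open>Q\<close>'s this gives \<open>P\<^sub>i\<^sub>j \<inter> Q\<^sub>i\<^sub>k = {}\<close>, and then a count inside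
  \<open>R\<^sub>i\<^sub>k\<close> gives \<open>#(P\<^sub>i\<^sub>j - P\<^sub>k\<^sub>l) \<le> 2\<close>.  The bound for the \<open>Q\<close>'s follows by exchanging \<open>p\<close> and \<open>q\<close>.\<close>

section \<open>Functions injective modulo \<open>m\<close> away from a base value\<close>

definition inj_mod_on :: "int \<Rightarrow> ('a \<Rightarrow> int) \<Rightarrow> 'a set \<Rightarrow> bool" where
  "inj_mod_on m a A \<longleftrightarrow> (\<forall>s\<in>A. \<forall>t\<in>A. [a s = a t] (mod m) \<longrightarrow> s = t)"

definition spread_mod :: "int \<Rightarrow> 'a set \<Rightarrow> ('a \<Rightarrow> int) \<Rightarrow> int \<Rightarrow> 'a set \<Rightarrow> bool" where
  "spread_mod m S a r P \<longleftrightarrow> P \<subseteq> S \<and> inj_mod_on m a P \<and>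
     (\<forall>t\<in>P. \<not> [a t = r] (mod m)) \<and> (\<forall>t\<in>S - P. [a t = r] (mod m))"

lemma inj_mod_on_subset: "inj_mod_on m a A \<Longrightarrow> B \<subseteq> A \<Longrightarrow> inj_mod_on m a B"
  unfolding inj_mod_on_def by blast

lemma card_le_1_if_inj_mod_on_const:
  assumes "inj_mod_on m a A" and "\<And>t. t \<in> A \<Longrightarrow> [a t = c] (mod m)"
  shows "card A \<le> 1"
proof -
  have "s = t" if "s \<in> A" "t \<in> A" for s t
    using assms that unfolding inj_mod_on_def by (meson cong_sym cong_trans)
  then show ?thesis
    by (metis One_nat_def card.infinite card_le_Suc0_iff_eq zero_le)
qed

lemma spread_mod_cong:
  assumes "spread_mod m S a r P" and "\<And>t. t \<in> S \<Longrightarrow> [b t = a t] (mod m)" and "[s = r] (mod m)"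
  shows "spread_mod m S b s P"
proof -
  have "[b t = b u] (mod m) \<longleftrightarrow> [a t = a u] (mod m)" if "t \<in> S" "u \<in> S" for t u
    using assms(2)[OF that(1)] assms(2)[OF that(2)] by (meson cong_sym cong_trans)
  moreover have "[b t = s] (mod m) \<longleftrightarrow> [a t = r] (mod m)" if "t \<in> S" for t
    using assms(2)[OF that] assms(3) by (meson cong_sym cong_trans)
  ultimately show ?thesis
    using assms(1) unfolding spread_mod_def inj_mod_on_def by (simp add: subset_iff)
qed

lemma spread_mod_uminus: "spread_mod m S a r P \<Longrightarrow> spread_mod m S (\<lambda>t. - a t) (- r) P"
  unfolding spread_mod_def inj_mod_on_def cong_minus_minus_iff by blast

lemma spread_mod_repeated_value:
  assumes "spread_mod m S a r P" and "x \<in> S" "y \<in> S" "x \<noteq> y" and "[a x = a y] (mod m)"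
  shows "[a x = r] (mod m)"
  using assms unfolding spread_mod_def inj_mod_on_def
  by (metis Diff_iff cong_trans)

lemma obtain_two_distinct:
  assumes "2 \<le> card A"
  obtains x y where "x \<in> A" "y \<in> A" "x \<noteq> y"
proof -
  have "finite A" using assms card.infinite by fastforce
  moreover have "\<not> card A \<le> Suc 0" using assms by simp
  ultimately show ?thesis using that card_le_Suc0_iff_eq by blast
qed

lemma spread_mod_unique:
  assumes P: "spread_mod m S a r P" and P': "spread_mod m S a r' P'" and "2 \<le> card (S - P')"
  shows "P' = P"
proof -
  obtain x y where xy: "x \<in> S - P'" "y \<in> S - P'" "x \<noteq> y"
    using \<open>2 \<le> card (S - P')\<close> by (rule obtain_two_distinct)
  have "[a x = r'] (mod m)" "[a y = r'] (mod m)"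
    using P' xy unfolding spread_mod_def by auto
  then have "[a x = r] (mod m)"
    using spread_mod_repeated_value[OF P, of x y] xy by (meson DiffD1 cong_sym cong_trans)
  then have "[r = r'] (mod m)"
    using \<open>[a x = r'] (mod m)\<close> by (meson cong_sym cong_trans)
  then show ?thesis
    using P P' unfolding spread_mod_def by (meson DiffI cong_sym cong_trans subsetD subset_antisym subsetI)
qed

lemma cong_diff_rcancel: "[y - c = y' - c] (mod m) \<longleftrightarrow> [y = y'] (mod m)" for c y y' m :: int
  by (metis cong_add_rcancel diff_conv_add_uminus)

lemma spread_mod_shift:
  assumes spread: "spread_mod m S a r P" and "A \<subseteq> P" and shift: "\<forall>t\<in>A. [b t = a t - c] (mod m)"
  shows "inj_mod_on m b A" and "\<And>t. t \<in> A \<Longrightarrow> \<not> [b t = r - c] (mod m)"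
proof -
  have shift_iff: "[b t = x - c] (mod m) \<longleftrightarrow> [a t = x] (mod m)" if "t \<in> A" for t x
  proof -
    have "[b t = x - c] (mod m) \<longleftrightarrow> [a t - c = x - c] (mod m)"
      using shift that by (meson cong_sym cong_trans)
    also have "\<dots> \<longleftrightarrow> [a t = x] (mod m)" by (rule cong_diff_rcancel)
    finally show ?thesis .
  qed
  show "inj_mod_on m b A"
    unfolding inj_mod_on_def
  proof (intro ballI impI)
    fix s t assume "s \<in> A" "t \<in> A" "[b s = b t] (mod m)"
    then have "[a s = a t] (mod m)"
      using shift shift_iff by (meson cong_sym cong_trans)
    then show "s = t"
      using spread \<open>s \<in> A\<close> \<open>t \<in> A\<close> \<open>A \<subseteq> P\<close> unfolding spread_mod_def inj_mod_on_def by blast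
  qed
  show "\<not> [b t = r - c] (mod m)" if "t \<in> A" for t
    using spread that \<open>A \<subseteq> P\<close> shift_iff[OF that] unfolding spread_mod_def by blast
qed

lemma spread_mod_diff:
  assumes P1: "spread_mod m S a1 r1 P1" and P2: "spread_mod m S a2 r2 P2"
    and a3: "\<forall>t\<in>S. [a3 t = a2 t - a1 t] (mod m)"
  shows "inj_mod_on m a3 (P1 - P2)" "inj_mod_on m a3 (P2 - P1)"
    and "\<And>t. t \<in> P1 - P2 \<union> (P2 - P1) \<Longrightarrow> \<not> [a3 t = r2 - r1] (mod m)"
    and "\<And>t. t \<in> S - P1 - P2 \<Longrightarrow> [a3 t = r2 - r1] (mod m)"
proof -
  have S: "P1 \<subseteq> S" "P2 \<subseteq> S"
    and off: "\<And>t. t \<in> S - P1 \<Longrightarrow> [a1 t = r1] (mod m)" "\<And>t. t \<in> S - P2 \<Longrightarrow> [a2 t = r2] (mod m)"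
    using P1 P2 unfolding spread_mod_def by auto
  have "[a3 t = r2 - a1 t] (mod m)" if "t \<in> P1 - P2" for t
    using cong_trans[OF a3[rule_format] cong_diff[OF off(2) cong_refl]] that S by blast
  then have "\<forall>t\<in>P1 - P2. [a3 t = - a1 t - - r2] (mod m)"
    by simp
  note on_P1 = spread_mod_shift[OF spread_mod_uminus[OF P1] Diff_subset this]
  have "\<forall>t\<in>P2 - P1. [a3 t = a2 t - r1] (mod m)"
    using cong_trans[OF a3[rule_format] cong_diff[OF cong_refl off(1)]] S by blast
  note on_P2 = spread_mod_shift[OF P2 Diff_subset this]
  show "inj_mod_on m a3 (P1 - P2)" by (fact on_P1(1))
  show "inj_mod_on m a3 (P2 - P1)" by (fact on_P2(1))
  show "\<not> [a3 t = r2 - r1] (mod m)" if "t \<in> P1 - P2 \<union> (P2 - P1)" for t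
    using that on_P1(2) on_P2(2) by fastforce
  show "[a3 t = r2 - r1] (mod m)" if "t \<in> S - P1 - P2" for t
    using cong_trans[OF a3[rule_format] cong_diff[OF off(2) off(1)]] that by blast
qed

section \<open>Three pairs of rows\<close>

text \<open>What the partition \<open>P\<^sub>i\<^sub>j, Q\<^sub>i\<^sub>j, R\<^sub>i\<^sub>j\<close> says about \<open>L\<^sub>i\<^sub>j\<close> modulo \<open>p\<close> and modulo \<open>q\<close> separately.\<close>
definition residue_partition ::
  "nat \<Rightarrow> nat \<Rightarrow> 'a set \<Rightarrow> 'a set \<Rightarrow> 'a set \<Rightarrow> ('a \<Rightarrow> int) \<Rightarrow> int \<Rightarrow> bool" where
  "residue_partition p q S P Q L r \<longleftrightarrow> P \<inter> Q = {} \<and> card P = p - 1 \<and> card Q = q - 1 \<and>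
     spread_mod (int p) S L r P \<and> spread_mod (int q) S L r Q"

lemma residue_partition_swap: "residue_partition q p S Q P L r = residue_partition p q S P Q L r"
  unfolding residue_partition_def by auto

lemma card_diff_residue_partition:
  assumes part: "residue_partition p q S P Q L r"
    and S: "finite S" "card S = p + q" and pos: "0 < p" "0 < q"
  shows "card (S - P) = q + 1" "card (S - P - Q) = 2"
proof -
  have sub: "P \<subseteq> S" "Q \<subseteq> S - P" and card: "card P = p - 1" "card Q = q - 1"
    using part unfolding residue_partition_def spread_mod_def by auto
  show SP: "card (S - P) = q + 1"
    using card_Diff_subset[OF finite_subset[OF sub(1) S(1)] sub(1)] S card pos by simp
  show "card (S - P - Q) = 2"
    using card_Diff_subset[OF finite_subset[OF sub(2)] sub(2)] S SP card pos by simp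
qed

text \<open>The indices 1, 2, 3 stand for the pairs \<open>(i, j)\<close>, \<open>(i, k)\<close>, \<open>(j, k)\<close> of three distinct rows.\<close>
locale triangle =
  fixes p q :: nat and S :: "'a set"
    and P1 Q1 P2 Q2 P3 Q3 :: "'a set" and L1 L2 L3 :: "'a \<Rightarrow> int" and r1 r2 r3 :: int
  assumes finite_S: "finite S" and card_S: "card S = p + q"
    and p_ge: "5 \<le> p" and q_ge: "5 \<le> q"
    and part1: "residue_partition p q S P1 Q1 L1 r1"
    and part2: "residue_partition p q S P2 Q2 L2 r2"
    and part3: "residue_partition p q S P3 Q3 L3 r3"
    and L3_diff_p: "\<forall>t\<in>S. [L3 t = L2 t - L1 t] (mod int p)"
    and L3_diff_q: "\<forall>t\<in>S. [L3 t = L2 t - L1 t] (mod int q)"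
begin

lemma triangle_swap: "triangle q p S Q1 P1 Q2 P2 Q3 P3 L1 L2 L3 r1 r2 r3"
  using finite_S card_S p_ge q_ge part1 part2 part3 L3_diff_p L3_diff_q
  by unfold_locales (auto simp: residue_partition_swap)

lemma spread:
  "spread_mod (int p) S L1 r1 P1" "spread_mod (int p) S L2 r2 P2" "spread_mod (int p) S L3 r3 P3"
  "spread_mod (int q) S L1 r1 Q1" "spread_mod (int q) S L2 r2 Q2" "spread_mod (int q) S L3 r3 Q3"
  using part1 part2 part3 unfolding residue_partition_def by auto

lemma subsets: "P1 \<subseteq> S" "P2 \<subseteq> S" "P3 \<subseteq> S" "Q1 \<subseteq> S" "Q2 \<subseteq> S" "Q3 \<subseteq> S"
  using spread unfolding spread_mod_def by auto

lemma finite_sets: "finite P1" "finite P2" "finite P3" "finite Q1" "finite Q2" "finite Q3"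
  using subsets finite_S by (auto intro: finite_subset)

lemma disjoint: "P1 \<inter> Q1 = {}" "P2 \<inter> Q2 = {}" "P3 \<inter> Q3 = {}"
  using part1 part2 part3 unfolding residue_partition_def by auto

text \<open>On \<open>P1 \<inter> Q2\<close> the difference \<open>L3\<close> is injective both mod \<open>p\<close> and mod \<open>q\<close>, so at most one
  point of it lies off \<open>P3\<close> and at most one off \<open>Q3\<close>.\<close>
lemma card_P1_Int_Q2_le: "card (P1 \<inter> Q2) \<le> 2"
proof -
  let ?C = "P1 \<inter> Q2"
  have "inj_mod_on (int p) L3 ?C"
    by (rule inj_mod_on_subset[OF spread_mod_diff(1)[OF spread(1,2) L3_diff_p]]) (use disjoint(2) in blast)
  then have off_P3: "card (?C - P3) \<le> 1"
    using spread(3) subsets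
    by (intro card_le_1_if_inj_mod_on_const[where c = r3]) (auto simp: spread_mod_def elim: inj_mod_on_subset)
  have "inj_mod_on (int q) L3 ?C"
    by (rule inj_mod_on_subset[OF spread_mod_diff(2)[OF spread(4,5) L3_diff_q]]) (use disjoint(1) in blast)
  then have off_Q3: "card (?C - Q3) \<le> 1"
    using spread(6) subsets
    by (intro card_le_1_if_inj_mod_on_const[where c = r3]) (auto simp: spread_mod_def elim: inj_mod_on_subset)
  have "?C \<subseteq> (?C - P3) \<union> (?C - Q3)" using disjoint(3) by blast
  then have "card ?C \<le> card ((?C - P3) \<union> (?C - Q3))"
    by (rule card_mono[rotated]) (use finite_S subsets in \<open>blast intro: finite_subset\<close>)
  also have "\<dots> \<le> card (?C - P3) + card (?C - Q3)" by (rule card_Un_le)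
  finally show ?thesis using off_P3 off_Q3 by linarith
qed

lemma card_S_diff: "card (S - P1) = q + 1" "card (S - P3) = q + 1" "card (S - P1 - Q1) = 2"
  using card_diff_residue_partition[OF part1 finite_S card_S] card_diff_residue_partition[OF part3 finite_S card_S]
    p_ge q_ge by auto

lemma card_outside: "card (S - P1 - P2) = q + 1 - card (P2 - P1)"
proof -
  have "S - P1 - P2 = (S - P1) - (P2 - P1)" by blast
  moreover have "P2 - P1 \<subseteq> S - P1" using subsets by blast
  ultimately show ?thesis
    using card_Diff_subset[of "P2 - P1" "S - P1"] card_S_diff(1) finite_sets by simp
qed

lemma two_le_card_outside: "2 \<le> card (S - P1 - P2)"
proof -
  have "card (Q1 \<inter> P2) \<le> 2"
    using triangle.card_P1_Int_Q2_le[OF triangle_swap] .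
  have "P2 - P1 \<subseteq> (Q1 \<inter> P2) \<union> (S - P1 - Q1)" using subsets by blast
  then have "card (P2 - P1) \<le> card ((Q1 \<inter> P2) \<union> (S - P1 - Q1))"
    by (rule card_mono[rotated]) (use finite_S finite_sets in blast)
  also have "\<dots> \<le> card (Q1 \<inter> P2) + card (S - P1 - Q1)" by (rule card_Un_le)
  finally show ?thesis
    using \<open>card (Q1 \<inter> P2) \<le> 2\<close> card_S_diff(3) card_outside q_ge by linarith
qed

text \<open>Two points outside \<open>P1 \<union> P2\<close> share the value \<open>r2 - r1\<close> of \<open>L3\<close> mod \<open>p\<close>, which is therefore
  the base value \<open>r3\<close>.\<close>
lemma symdiff_subset_P3: "P1 - P2 \<subseteq> P3" "P2 - P1 \<subseteq> P3" "P3 \<inter> (S - P1 - P2) = {}"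
proof -
  note diff = spread_mod_diff[OF spread(1,2) L3_diff_p]
  obtain x y where xy: "x \<in> S - P1 - P2" "y \<in> S - P1 - P2" "x \<noteq> y"
    using two_le_card_outside by (rule obtain_two_distinct)
  have "[L3 x = L3 y] (mod int p)"
    using diff(4)[OF xy(1)] diff(4)[OF xy(2)] by (meson cong_sym cong_trans)
  then have "[L3 x = r3] (mod int p)"
    using spread_mod_repeated_value[OF spread(3)] xy by blast
  then have base: "[r2 - r1 = r3] (mod int p)"
    using diff(4)[OF xy(1)] by (meson cong_sym cong_trans)
  have off_P3: "[L3 t = r3] (mod int p)" if "t \<in> S - P3" for t
    using that spread(3) unfolding spread_mod_def by blast
  have "t \<in> P3" if "t \<in> P1 - P2 \<union> (P2 - P1)" for t
  proof (rule ccontr)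
    assume "t \<notin> P3"
    then have "[L3 t = r3] (mod int p)" using off_P3 that subsets by blast
    then have "[L3 t = r2 - r1] (mod int p)" using base by (meson cong_sym cong_trans)
    then show False using diff(3) that by blast
  qed
  then show "P1 - P2 \<subseteq> P3" "P2 - P1 \<subseteq> P3" by blast+
  have "\<not> [L3 t = r3] (mod int p)" if "t \<in> P3" for t
    using that spread(3) unfolding spread_mod_def by blast
  then show "P3 \<inter> (S - P1 - P2) = {}"
    using diff(4) base by (blast intro: cong_trans)
qed

lemma P1_Int_Q2_empty: "P1 \<inter> Q2 = {}"
proof -
  have "P1 \<inter> Q2 \<subseteq> P3 \<inter> Q3"
    using symdiff_subset_P3(1) triangle.symdiff_subset_P3(2)[OF triangle_swap] disjoint(1,2) by blast
  then show ?thesis using disjoint(3) by blast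
qed

text \<open>With \<open>R1 = S - P1 - Q1\<close>: off \<open>P3\<close>, a point of \<open>W\<close> lies either outside \<open>P1 \<union> P2\<close>, hence in
  \<open>R1 - P2\<close>, or in \<open>P1 \<inter> P2\<close>; the latter points are as many as those of \<open>P2 - P1 = R1 \<inter> P2\<close>.\<close>
lemma card_diff_P3_le:
  assumes W: "W \<subseteq> S" "W \<inter> Q1 = {}" "W \<inter> Q2 = {}"
  shows "card (W - P3) \<le> 2"
proof -
  let ?B = "S - P1 - P2" and ?R = "S - P1 - Q1"
  have "?B \<subseteq> S - P3" using symdiff_subset_P3(3) by blast
  then have "card ((S - P3) - ?B) = card (S - P3) - card ?B"
    using finite_S by (meson card_Diff_subset finite_Diff)
  also have "\<dots> = card (P2 - P1)"
    using card_S_diff(2) card_outside two_le_card_outside by linarith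
  also have "P2 - P1 = ?R \<inter> P2"
    using triangle.P1_Int_Q2_empty[OF triangle_swap] subsets by blast
  finally have card_rest: "card ((S - P3) - ?B) = card (?R \<inter> P2)" .
  have "W - P3 \<subseteq> (?R - P2) \<union> ((S - P3) - ?B)" using W by blast
  then have "card (W - P3) \<le> card ((?R - P2) \<union> ((S - P3) - ?B))"
    by (rule card_mono[rotated]) (use finite_S in blast)
  also have "\<dots> \<le> card (?R - P2) + card (?R \<inter> P2)"
    using card_Un_le[of "?R - P2" "(S - P3) - ?B"] card_rest by linarith
  also have "\<dots> = card ?R"
    using card_Int_Diff[of ?R P2] finite_S by simp
  finally show ?thesis using card_S_diff(3) by simp
qed

end

section \<open>The partitions of a Hadamard phase matrix\<close>

lemma Ldiff_swap: "Ldiff q p M i j = Ldiff p q M i j"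
  unfolding Ldiff_def by (simp add: mult.commute)

lemma coset_mod_swap: "coset_mod q p d r = coset_mod p q d r"
  unfolding coset_mod_def by (simp add: mult.commute)

lemma pqr_partition_swap: "pqr_partition q p M i j Q P R r = pqr_partition p q M i j P Q R r"
  unfolding pqr_partition_def Ldiff_swap[of q p] coset_mod_swap[of q p] by (auto simp: mult.commute add.commute)

lemma Qset_eq_Pset_swap: "Qset p q M i j = Pset q p M i j"
  unfolding Qset_def Pset_def pqr_partition_swap[of p q] ..

lemma Ldiff_cong: "[Ldiff p q M i j t = M j t - M i t] (mod int (p * q))"
  unfolding Ldiff_def by simp

lemma cong_if_mem_coset_mod:
  assumes "x \<in> coset_mod p q d r" and "d dvd p * q"
  shows "[x = r] (mod int d)"
proof -
  obtain s where "x = (r + int d * s) mod int (p * q)"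
    using assms(1) unfolding coset_mod_def by blast
  then have "[x = r + int d * s] (mod int d)"
    using assms(2) by (metis cong_def mod_mod_cancel of_nat_dvd_iff)
  then show ?thesis
    by (metis cong_add_lcancel_0 cong_mult_self_left cong_trans)
qed

lemma coset_mod_eq_image:
  assumes "p * q = d * e" and "0 < e"
  shows "coset_mod p q d r = (\<lambda>s. (r + int d * s) mod int (p * q)) ` {0..<int e}"
proof -
  have "(r + int d * s) mod int (p * q) = (r + int d * (s mod int e)) mod int (p * q)" for s
  proof -
    have "r + int d * s = (r + int d * (s mod int e)) + int (p * q) * (s div int e)"
      using assms(1) by (simp add: algebra_simps flip: distrib_left)
    then show ?thesis by (metis add.assoc mod_mult_self2)
  qed
  then show ?thesis
    unfolding coset_mod_def using assms(2) by (force intro: image_eqI)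
qed

lemma card_coset_mod:
  assumes "p * q = d * e" and "0 < d" "0 < e"
  shows "card (coset_mod p q d r) = e"
proof -
  have "inj_on (\<lambda>s. (r + int d * s) mod int (p * q)) {0..<int e}"
  proof (rule inj_onI)
    fix s s' assume s: "s \<in> {0..<int e}" "s' \<in> {0..<int e}"
      and "(r + int d * s) mod int (p * q) = (r + int d * s') mod int (p * q)"
    then have "[int d * s = int d * s'] (mod int d * int e)"
      using assms(1) by (metis cong_add_lcancel cong_def of_nat_mult)
    then have "[s = s'] (mod int e)"
      using assms(2) by (simp add: cong_iff_dvd_diff flip: right_diff_distrib)
    then show "s = s'" using s cong_less_imp_eq_int by auto
  qed
  then show ?thesis
    unfolding coset_mod_eq_image[OF assms(1,3)] by (simp add: card_image)
qed

lemma eq_if_cong_coprime: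
  assumes "coprime p q" and "[x = y] (mod int p)" "[x = y] (mod int q)"
    and "x mod int (p * q) = x" "y mod int (p * q) = y"
  shows "x = y"
proof -
  have "[x = y] (mod int p * int q)"
    using assms(1-3) by (simp add: coprime_cong_mult)
  then show ?thesis using assms(4,5) by (simp add: cong_def)
qed

lemma inj_on_Ldiff_if_pqr_partition:
  assumes "0 < p" "0 < q" and part: "pqr_partition p q M i j P Q R r"
  shows "inj_on (Ldiff p q M i j) P"
proof -
  have cover: "P \<union> Q \<union> R = {..<p + q}" and r: "r \<in> {0..<int (p * q)}" and card_P: "card P = p - 1"
    and image_P: "Ldiff p q M i j ` P = coset_mod p q q r - {r}"
    using part unfolding pqr_partition_def by auto
  have "r = (r + int q * 0) mod int (p * q)"
    using r by simp
  then have "r \<in> coset_mod p q q r"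
    unfolding coset_mod_def by blast
  moreover have "card (coset_mod p q q r) = p"
    using card_coset_mod[of p q q p r] assms(1,2) by (simp add: mult.commute)
  ultimately have "card (Ldiff p q M i j ` P) = card P"
    unfolding image_P card_P by simp
  moreover have "finite P"
    using cover by (auto intro: finite_subset)
  ultimately show ?thesis
    by (simp add: eq_card_imp_inj_on)
qed

lemma spread_mod_if_pqr_partition:
  assumes "coprime p q" "0 < p" "0 < q" and part: "pqr_partition p q M i j P Q R r"
  shows "spread_mod (int p) {..<p + q} (Ldiff p q M i j) r P"
proof -
  let ?L = "Ldiff p q M i j"
  have cover: "P \<union> Q \<union> R = {..<p + q}" and r: "r \<in> {0..<int (p * q)}"
    and on_R: "\<And>t. t \<in> R \<Longrightarrow> ?L t = r"
    and image_P: "?L ` P = coset_mod p q q r - {r}" and image_Q: "?L ` Q = coset_mod p q p r - {r}"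
    using part unfolding pqr_partition_def by auto
  have residue: "?L t mod int (p * q) = ?L t" for t
    unfolding Ldiff_def by simp
  have r_residue: "r mod int (p * q) = r"
    using r by simp
  have on_P: "[?L t = r] (mod int q) \<and> ?L t \<noteq> r" if "t \<in> P" for t
    using image_P that cong_if_mem_coset_mod[of "?L t" p q q r] by auto
  have on_Q: "[?L t = r] (mod int p)" if "t \<in> Q" for t
    using image_Q that cong_if_mem_coset_mod[of "?L t" p q p r] by auto
  show ?thesis
    unfolding spread_mod_def inj_mod_on_def
  proof (intro conjI ballI impI)
    show "P \<subseteq> {..<p + q}" using cover by blast
  next
    fix s t assume "s \<in> P" "t \<in> P" "[?L s = ?L t] (mod int p)"
    moreover have "[?L s = ?L t] (mod int q)"
      using on_P \<open>s \<in> P\<close> \<open>t \<in> P\<close> by (meson cong_sym cong_trans)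
    ultimately have "?L s = ?L t"
      using eq_if_cong_coprime[OF assms(1) _ _ residue residue] by blast
    then show "s = t"
      by (rule inj_onD[OF inj_on_Ldiff_if_pqr_partition[OF assms(2-4)] _ \<open>s \<in> P\<close> \<open>t \<in> P\<close>])
  next
    fix t assume "t \<in> P"
    then show "\<not> [?L t = r] (mod int p)"
      using on_P eq_if_cong_coprime[OF assms(1) _ _ residue r_residue] by blast
  next
    fix t assume "t \<in> {..<p + q} - P"
    then have "t \<in> Q \<or> t \<in> R" using cover by blast
    then show "[?L t = r] (mod int p)" using on_Q on_R by auto
  qed
qed

lemma residue_partition_if_pqr_partition:
  assumes "coprime p q" "0 < p" "0 < q" and part: "pqr_partition p q M i j P Q R r"
  shows "residue_partition p q {..<p + q} P Q (Ldiff p q M i j) r"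
proof -
  have "pqr_partition q p M i j Q P R r"
    using part pqr_partition_swap[of q p] by simp
  then have "spread_mod (int q) {..<q + p} (Ldiff q p M i j) r Q"
    using assms(1-3) by (intro spread_mod_if_pqr_partition) (simp_all add: coprime_commute)
  then have "spread_mod (int q) {..<p + q} (Ldiff p q M i j) r Q"
    by (simp only: Ldiff_swap[of q p] add.commute)
  moreover have "P \<inter> Q = {}" "card P = p - 1" "card Q = q - 1"
    using part unfolding pqr_partition_def by auto
  ultimately show ?thesis
    using spread_mod_if_pqr_partition[OF assms] by (simp add: residue_partition_def)
qed

lemma Pset_eq:
  assumes "coprime p q" "0 < p" "0 < q" and part: "pqr_partition p q M i j P Q R r"
  shows "Pset p q M i j = P"
  unfolding Pset_def
proof (rule the_equality)
  show "\<exists>Q R r. pqr_partition p q M i j P Q R r" using part by blast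
next
  fix P' assume "\<exists>Q' R' r'. pqr_partition p q M i j P' Q' R' r'"
  then obtain Q' R' r' where part': "pqr_partition p q M i j P' Q' R' r'" by blast
  then have "P' \<subseteq> {..<p + q}" "card P' = p - 1"
    unfolding pqr_partition_def by auto
  then have "2 \<le> card ({..<p + q} - P')"
    using assms(2,3) by (simp add: card_Diff_subset finite_subset)
  then show "P' = P"
    by (rule spread_mod_unique[OF spread_mod_if_pqr_partition[OF assms(1-3) part]
          spread_mod_if_pqr_partition[OF assms(1-3) part']])
qed

lemma Qset_eq:
  assumes "coprime p q" "0 < p" "0 < q" and part: "pqr_partition p q M i j P Q R r"
  shows "Qset p q M i j = Q"
proof -
  have "pqr_partition q p M i j Q P R r"
    using part pqr_partition_swap[of q p] by simp
  then show ?thesis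
    unfolding Qset_eq_Pset_swap using assms(1-3) by (intro Pset_eq) (simp_all add: coprime_commute)
qed

lemma Ldiff_triangle:
  assumes "d dvd p * q"
  shows "[Ldiff p q M j k t = Ldiff p q M i k t - Ldiff p q M i j t] (mod int d)"
proof -
  have "[Ldiff p q M i k t - Ldiff p q M i j t = (M k t - M i t) - (M j t - M i t)] (mod int (p * q))"
    by (intro cong_diff Ldiff_cong)
  then have "[Ldiff p q M i k t - Ldiff p q M i j t = M k t - M j t] (mod int (p * q))"
    by simp
  then have "[Ldiff p q M j k t = Ldiff p q M i k t - Ldiff p q M i j t] (mod int (p * q))"
    by (rule cong_trans[OF Ldiff_cong cong_sym])
  then show ?thesis
    by (rule cong_dvd_modulus) (use assms in \<open>simp only: of_nat_dvd_iff\<close>)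
qed

lemma Ldiff_swap_cong:
  assumes "d dvd p * q"
  shows "[Ldiff p q M j i t = - Ldiff p q M i j t] (mod int d)"
  using Ldiff_triangle[OF assms, where i = i and j = j and k = i] by (simp add: Ldiff_def)

locale pq_partitioned =
  fixes p q :: nat and M :: "nat \<Rightarrow> nat \<Rightarrow> int"
  assumes coprime: "coprime p q" and p_ge: "5 \<le> p" and q_ge: "5 \<le> q"
    and partition_exists:
      "\<And>i j. i < p + q \<Longrightarrow> j < p + q \<Longrightarrow> i \<noteq> j \<Longrightarrow> \<exists>P Q R r. pqr_partition p q M i j P Q R r"
begin

lemma pq_partitioned_swap: "pq_partitioned q p M"
proof
  show "coprime q p" using coprime by (simp add: coprime_commute)
  show "5 \<le> q" by (fact q_ge)
  show "5 \<le> p" by (fact p_ge)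
  fix i j assume "i < q + p" "j < q + p" "i \<noteq> j"
  then have "i < p + q" "j < p + q" "i \<noteq> j" by simp_all
  then obtain P Q R r where "pqr_partition p q M i j P Q R r"
    using partition_exists by blast
  then show "\<exists>P Q R r. pqr_partition q p M i j P Q R r"
    using pqr_partition_swap[of q p] by blast
qed

lemma residue_partition_Pset:
  assumes "i < p + q" "j < p + q" "i \<noteq> j"
  shows "\<exists>r. residue_partition p q {..<p + q} (Pset p q M i j) (Qset p q M i j) (Ldiff p q M i j) r"
proof -
  obtain P Q R r where part: "pqr_partition p q M i j P Q R r"
    using partition_exists[OF assms] by blast
  have pos: "0 < p" "0 < q" using p_ge q_ge by simp_all
  show ?thesis
    using residue_partition_if_pqr_partition[OF coprime pos part]
      Pset_eq[OF coprime pos part] Qset_eq[OF coprime pos part] by auto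
qed

lemma Pset_subset: "Pset p q M i j \<subseteq> {..<p + q}"
  and card_Pset: "card (Pset p q M i j) = p - 1"
  if "i < p + q" "j < p + q" "i \<noteq> j"
  using residue_partition_Pset[OF that] unfolding residue_partition_def spread_mod_def by auto

lemma Pset_sym:
  assumes "i < p + q" "j < p + q" "i \<noteq> j"
  shows "Pset p q M j i = Pset p q M i j"
proof -
  obtain r where "residue_partition p q {..<p + q} (Pset p q M i j) (Qset p q M i j) (Ldiff p q M i j) r"
    using residue_partition_Pset[OF assms] by blast
  then have "spread_mod (int p) {..<p + q} (Ldiff p q M i j) r (Pset p q M i j)"
    unfolding residue_partition_def by blast
  then have ij: "spread_mod (int p) {..<p + q} (Ldiff p q M j i) (- r) (Pset p q M i j)"
    by (rule spread_mod_cong[OF spread_mod_uminus]) (simp_all add: Ldiff_swap_cong)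
  obtain r' where ji_part: "residue_partition p q {..<p + q} (Pset p q M j i) (Qset p q M j i) (Ldiff p q M j i) r'"
    using residue_partition_Pset assms by blast
  then have ji: "spread_mod (int p) {..<p + q} (Ldiff p q M j i) r' (Pset p q M j i)"
    unfolding residue_partition_def by blast
  have "2 \<le> card ({..<p + q} - Pset p q M j i)"
    using card_diff_residue_partition(1)[OF ji_part] p_ge q_ge by simp
  then show ?thesis by (rule spread_mod_unique[OF ij ji])
qed

lemma triangle_Pset:
  assumes "i < p + q" "j < p + q" "k < p + q" "i \<noteq> j" "i \<noteq> k" "j \<noteq> k"
  obtains r1 r2 r3 where "triangle p q {..<p + q}
    (Pset p q M i j) (Qset p q M i j) (Pset p q M i k) (Qset p q M i k) (Pset p q M j k) (Qset p q M j k)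
    (Ldiff p q M i j) (Ldiff p q M i k) (Ldiff p q M j k) r1 r2 r3"
proof -
  obtain r1 where "residue_partition p q {..<p + q} (Pset p q M i j) (Qset p q M i j) (Ldiff p q M i j) r1"
    using residue_partition_Pset[of i j] assms by blast
  moreover obtain r2 where "residue_partition p q {..<p + q} (Pset p q M i k) (Qset p q M i k) (Ldiff p q M i k) r2"
    using residue_partition_Pset[of i k] assms by blast
  moreover obtain r3 where "residue_partition p q {..<p + q} (Pset p q M j k) (Qset p q M j k) (Ldiff p q M j k) r3"
    using residue_partition_Pset[of j k] assms by blast
  ultimately have "triangle p q {..<p + q}
    (Pset p q M i j) (Qset p q M i j) (Pset p q M i k) (Qset p q M i k) (Pset p q M j k) (Qset p q M j k)
    (Ldiff p q M i j) (Ldiff p q M i k) (Ldiff p q M j k) r1 r2 r3"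
    using p_ge q_ge by unfold_locales (simp_all add: Ldiff_triangle)
  then show ?thesis by (rule that)
qed

lemma Pset_Int_Qset_empty:
  assumes "i < p + q" "j < p + q" "k < p + q" "i \<noteq> j" "i \<noteq> k"
  shows "Pset p q M i j \<inter> Qset p q M i k = {}"
proof (cases "j = k")
  case True
  then show ?thesis
    using residue_partition_Pset[of i j] assms unfolding residue_partition_def by auto
next
  case False
  then obtain r1 r2 r3 where "triangle p q {..<p + q}
    (Pset p q M i j) (Qset p q M i j) (Pset p q M i k) (Qset p q M i k) (Pset p q M j k) (Qset p q M j k)
    (Ldiff p q M i j) (Ldiff p q M i k) (Ldiff p q M j k) r1 r2 r3"
    using triangle_Pset assms by blast
  then show ?thesis by (rule triangle.P1_Int_Q2_empty)
qed

lemma card_Pset_diff_same_row_le: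
  assumes "i < p + q" "j < p + q" "l < p + q" "i \<noteq> j" "i \<noteq> l"
  shows "card (Pset p q M i j - Pset p q M i l) \<le> 2"
proof -
  obtain r where part: "residue_partition p q {..<p + q} (Pset p q M i l) (Qset p q M i l) (Ldiff p q M i l) r"
    using residue_partition_Pset[of i l] assms by blast
  have "Pset p q M i j - Pset p q M i l \<subseteq> {..<p + q} - Pset p q M i l - Qset p q M i l"
    using Pset_subset[of i j] Pset_Int_Qset_empty[of i j l] assms by blast
  then have "card (Pset p q M i j - Pset p q M i l) \<le> card ({..<p + q} - Pset p q M i l - Qset p q M i l)"
    by (intro card_mono) auto
  then show ?thesis
    using card_diff_residue_partition(2)[OF part] p_ge q_ge by simp
qed

lemma card_Pset_diff_le:
  assumes "i < p + q" "j < p + q" "k < p + q" "l < p + q" "i \<noteq> j" "k \<noteq> l"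
  shows "card (Pset p q M i j - Pset p q M k l) \<le> 2"
proof -
  consider "k = i" | "l = i" | "k \<noteq> i" "l \<noteq> i" by blast
  then show ?thesis
  proof cases
    case 1
    then show ?thesis using card_Pset_diff_same_row_le assms by blast
  next
    case 2
    then show ?thesis using card_Pset_diff_same_row_le[of i j k] Pset_sym[of k l] assms by simp
  next
    case 3
    then obtain r1 r2 r3 where "triangle p q {..<p + q}
      (Pset p q M i k) (Qset p q M i k) (Pset p q M i l) (Qset p q M i l) (Pset p q M k l) (Qset p q M k l)
      (Ldiff p q M i k) (Ldiff p q M i l) (Ldiff p q M k l) r1 r2 r3"
      using triangle_Pset assms by metis
    then show ?thesis
    proof (rule triangle.card_diff_P3_le)
      show "Pset p q M i j \<subseteq> {..<p + q}" using Pset_subset assms by blast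
      show "Pset p q M i j \<inter> Qset p q M i k = {}" "Pset p q M i j \<inter> Qset p q M i l = {}"
        using Pset_Int_Qset_empty assms 3 by auto
    qed
  qed
qed

lemma card_Pset_Int_ge:
  assumes "i < p + q" "j < p + q" "k < p + q" "l < p + q" "i \<noteq> j" "k \<noteq> l"
  shows "p - 3 \<le> card (Pset p q M i j \<inter> Pset p q M k l)"
proof -
  have "finite (Pset p q M i j)"
    using Pset_subset[of i j] assms finite_subset by blast
  then show ?thesis
    using card_Int_Diff[of "Pset p q M i j" "Pset p q M k l"] card_Pset[of i j] card_Pset_diff_le[OF assms] assms
    by linarith
qed

end

theorem corollary6p8:
  fixes p q :: nat and M :: "nat \<Rightarrow> nat \<Rightarrow> int"
  assumes "prime p" and "prime q" and "p \<noteq> q"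
    and "hadamard_phase (p + q) (p * q) M"
    and "\<forall>i<p + q. \<forall>j<p + q. i \<noteq> j \<longrightarrow> (\<exists>P Q R r. pqr_partition p q M i j P Q R r)"
    and "p \<ge> 5" and "q \<ge> 5"
  shows "\<forall>i<p + q. \<forall>j<p + q. \<forall>k<p + q. \<forall>l<p + q. i \<noteq> j \<longrightarrow> k \<noteq> l \<longrightarrow>
           card (Pset p q M i j \<inter> Pset p q M k l) \<ge> p - 3 \<and>
           card (Qset p q M i j \<inter> Qset p q M k l) \<ge> q - 3"
proof -
  interpret pq_partitioned p q M
    using assms by unfold_locales (simp_all add: primes_coprime)
  interpret swapped: pq_partitioned q p M
    by (rule pq_partitioned_swap)
  show ?thesis
    using card_Pset_Int_ge swapped.card_Pset_Int_ge by (simp add: Qset_eq_Pset_swap add.commute)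
qed

end
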